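(* Assume the standing hypotheses below. Let $T=R[\lambda]$ with a new indeterminate $\lambda$, and set $F_1=f(\lambda^4w,\lambda^3x,\lambda y,z)=\sum_i f^{(i,4d_1-i)}\lambda^i$, $G_1=g(\lambda^4w,\lambda^3x,\lambda y,z)=\sum_j g^{(j,4d_2-j)}\lambda^j$, and $\tilde F_1=F_1/\lambda^{i_{\min}}$, $\tilde G_1=G_1/\lambda^{j_{\min}}$. Then $$\sqrt{(\tilde F_1,\tilde G_1)T}=\sqrt{(\lambda,f_{\min},g_{\min})T}\cap\mathfrak pT.$$
   Context: Let $k$ be an algebraically closed field of characteristic zero, $R=k[w,x,y,z]$, and let $\mathfrak p\subseteq R$ be the homogeneous prime ideal of Macaulay's curve $C_4\subseteq\mathbb P^3_k$, the curve with parametrization $[s^4:s^3t:st^3:t^4]$. Endow $R$ with the bigrading $\deg w=(4,0)$, $\deg x=(3,1)$, $\deg y=(1,3)$, $\deg z=(0,4)$; $\mathfrak p$ is bihomogeneous. Standing hypothesis: $f,g\in\mathfrak p$ are homogeneous (in the usual grading) of degrees $d_1,d_2$ with $\sqrt{(f,g)R}=\mathfrak p$. Write $f=\sum_{i=i_{\min}}^{i_{\max}} f^{(i,4d_1-i)}$ and $g=\sum_{j=j_{\min}}^{j_{\max}} g^{(j,4d_2-j)}$ as sums of bihomogeneous components, where $f^{(i,4d_1-i)}$ is the component of bidegree $(i,4d_1-i)$ and $i_{\min},i_{\max},j_{\min},j_{\max}$ are chosen so that $f_{\min}:=f^{(i_{\min},4d_1-i_{\min})}$, $f_{\max}:=f^{(i_{\max},4d_1-i_{\max})}$,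 $g_{\min}:=g^{(j_{\min},4d_2-j_{\min})}$, $g_{\max}:=g^{(j_{\max},4d_2-j_{\max})}$ are all nonzero. *)

theory Defs
  imports "HOL-Library.Poly_Mapping" "HOL-Computational_Algebra.Polynomial"
begin

datatype var = W | X | Y | Z

text \<open>R = k[w,x,y,z]: finitely supported functions from monomials (exponent vectors) to k.\<close>
type_synonym 'a mpoly4 = "(var \<Rightarrow>\<^sub>0 nat) \<Rightarrow>\<^sub>0 'a"

definition mpeval :: "'a::zero mpoly4 \<Rightarrow> ('a \<Rightarrow> 'b::comm_ring_1) \<Rightarrow> (var \<Rightarrow> 'b) \<Rightarrow> 'b" where
  "mpeval p c phi = (\<Sum>m\<in>Poly_Mapping.keys p. c (Poly_Mapping.lookup p m) * (\<Prod>v\<in>Poly_Mapping.keys (m::var \<Rightarrow>\<^sub>0 nat). phi v ^ Poly_Mapping.lookup m v))"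

definition Var :: "var \<Rightarrow> 'a::{zero,one} mpoly4" where
  "Var v = Poly_Mapping.single (Poly_Mapping.single v 1) 1"

definition mdeg :: "(var \<Rightarrow>\<^sub>0 nat) \<Rightarrow> nat" where
  "mdeg m = (\<Sum>v\<in>Poly_Mapping.keys m. Poly_Mapping.lookup m v)"

definition homogeneous :: "'a::zero mpoly4 \<Rightarrow> nat \<Rightarrow> bool" where
  "homogeneous p d \<longleftrightarrow> (\<forall>m\<in>Poly_Mapping.keys p. mdeg m = d)"

text \<open>First component of the bidegree: deg w = (4,0), deg x = (3,1), deg y = (1,3), deg z = (0,4).\<close>
definition wt :: "var \<Rightarrow> nat" where
  "wt v = (case v of W \<Rightarrow> 4 | X \<Rightarrow> 3 | Y \<Rightarrow> 1 | Z \<Rightarrow> 0)"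

definition bideg1 :: "(var \<Rightarrow>\<^sub>0 nat) \<Rightarrow> nat" where
  "bideg1 m = (\<Sum>v\<in>Poly_Mapping.keys m. wt v * Poly_Mapping.lookup m v)"

text \<open>Bihomogeneous component of p of bidegree (i, 4d - i) (for p homogeneous of degree d).\<close>
definition bicomp :: "'a::zero mpoly4 \<Rightarrow> nat \<Rightarrow> 'a mpoly4" where
  "bicomp p i = Abs_poly_mapping (\<lambda>m. if bideg1 m = i then Poly_Mapping.lookup p m else 0)"

definition gen_ideal :: "'b::comm_ring_1 set \<Rightarrow> 'b set" where
  "gen_ideal S = {a. \<exists>F c. finite F \<and> F \<subseteq> S \<and> a = (\<Sum>s\<in>F. c s * s)}"

definition radical :: "'b::comm_ring_1 set \<Rightarrow> 'b set" where
  "radical I = {a. \<exists>n. a ^ n \<in> I}"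

text \<open>The homogeneous ideal of Macaulay's curve C4 = {[s^4:s^3t:st^3:t^4]}:
  all polynomials vanishing on its affine cone.\<close>
definition curve_point :: "'a::comm_ring_1 \<Rightarrow> 'a \<Rightarrow> var \<Rightarrow> 'a" where
  "curve_point s t v = (case v of W \<Rightarrow> s^4 | X \<Rightarrow> s^3 * t | Y \<Rightarrow> s * t^3 | Z \<Rightarrow> t^4)"

definition macaulay_ideal :: "'a::comm_ring_1 mpoly4 set" where
  "macaulay_ideal = {p. \<forall>s t. mpeval p id (curve_point s t) = 0}"

text \<open>T = R[lambda], lambda = [:0,1:]. The substitution
  p(lambda^4 w, lambda^3 x, lambda y, z) in T.\<close>
definition lam_subst :: "'a::comm_ring_1 mpoly4 \<Rightarrow> 'a mpoly4 poly" where
  "lam_subst p = mpeval p (\<lambda>a. [:Poly_Mapping.single 0 a:]) (\<lambda>v. [:0,1:] ^ wt v * [:Var v:])"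

definition alg_closed :: "'a::field itself \<Rightarrow> bool" where
  "alg_closed _ \<longleftrightarrow> (\<forall>q::'a poly. degree q > 0 \<longrightarrow> (\<exists>x. poly q x = 0))"

end

theory Submission
  imports Defs
begin

text \<open>Let I = (F~, G~), J = (\<lambda>, f_min, g_min) and P = pT. Modulo \<lambda>, F~ and G~ reduce to
  f_min and g_min, so I \<subseteq> J \<subseteq> I + (\<lambda>). Since p is bihomogeneous (the torus acts on C4), the
  bihomogeneous components of f and g, which are the coefficients of F~ and G~, lie in p; so
  I \<subseteq> P, and P is radical because p is the vanishing ideal of C4. Conversely, every q \<in> p is
  nilpotent modulo (f, g), and substituting shows that \<lambda>^A q \<in> \<surd>I for large A. If x \<in> \<surd>J \<inter> P,
  then x^n \<equiv> \<lambda> u modulo I and \<lambda>^A x \<in> \<surd>I, whence x^(nA+1) \<in> \<surd>I.\<close>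

section \<open>Ideals in commutative rings\<close>

definition is_ideal :: "'b::comm_ring_1 set \<Rightarrow> bool" where
  "is_ideal K \<longleftrightarrow> 0 \<in> K \<and> (\<forall>a\<in>K. \<forall>b\<in>K. a + b \<in> K) \<and> (\<forall>r. \<forall>a\<in>K. r * a \<in> K)"

lemma is_idealI:
  "0 \<in> K \<Longrightarrow> (\<And>a b. a \<in> K \<Longrightarrow> b \<in> K \<Longrightarrow> a + b \<in> K) \<Longrightarrow> (\<And>r a. a \<in> K \<Longrightarrow> r * a \<in> K)
    \<Longrightarrow> is_ideal K"
  by (simp add: is_ideal_def)

lemma ideal_zero: "is_ideal K \<Longrightarrow> 0 \<in> K"
  by (simp add: is_ideal_def)

lemma ideal_add: "is_ideal K \<Longrightarrow> a \<in> K \<Longrightarrow> b \<in> K \<Longrightarrow> a + b \<in> K"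
  by (simp add: is_ideal_def)

lemma ideal_mult_left: "is_ideal K \<Longrightarrow> a \<in> K \<Longrightarrow> r * a \<in> K"
  by (simp add: is_ideal_def)

lemma ideal_mult_right: "is_ideal K \<Longrightarrow> a \<in> K \<Longrightarrow> a * r \<in> K"
  using ideal_mult_left[of K a r] by (simp add: mult.commute)

lemma ideal_sum: "is_ideal K \<Longrightarrow> (\<And>i. i \<in> A \<Longrightarrow> f i \<in> K) \<Longrightarrow> sum f A \<in> K"
  by (induction A rule: infinite_finite_induct) (auto simp: is_ideal_def)

lemma gen_ideal_generator: "s \<in> S \<Longrightarrow> s \<in> gen_ideal S"
  unfolding gen_ideal_def by (intro CollectI exI[of _ "{s}"] exI[of _ "\<lambda>_. 1"]) simp

lemma gen_ideal_minimal:
  assumes "is_ideal K" "S \<subseteq> K" shows "gen_ideal S \<subseteq> K"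
  using assms by (auto simp: gen_ideal_def intro!: ideal_sum ideal_mult_left)

lemma gen_idealI: "finite F \<Longrightarrow> F \<subseteq> S \<Longrightarrow> a = (\<Sum>s\<in>F. c s * s) \<Longrightarrow> a \<in> gen_ideal S"
  unfolding gen_ideal_def by blast

lemma is_ideal_gen_ideal: "is_ideal (gen_ideal S)"
proof (rule is_idealI)
  show "0 \<in> gen_ideal S"
    by (rule gen_idealI[of "{}"]) simp_all
next
  fix a b assume "a \<in> gen_ideal S" "b \<in> gen_ideal S"
  then obtain F1 c1 F2 c2 where F: "finite F1" "F1 \<subseteq> S" "finite F2" "F2 \<subseteq> S"
    and ab: "a = (\<Sum>s\<in>F1. c1 s * s)" "b = (\<Sum>s\<in>F2. c2 s * s)"
    unfolding gen_ideal_def by blast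
  have restrict: "(\<Sum>s\<in>F. c s * s) = (\<Sum>s\<in>F1 \<union> F2. (if s \<in> F then c s else 0) * s)"
    if "F \<subseteq> F1 \<union> F2" for F c
  proof -
    have "(\<Sum>s\<in>F. c s * s) = (\<Sum>s\<in>F1 \<union> F2. if s \<in> F then c s * s else 0)"
      using sum.inter_restrict[of "F1 \<union> F2" "\<lambda>s. c s * s" F] F(1,3) that by (simp add: Int_absorb1)
    also have "\<dots> = (\<Sum>s\<in>F1 \<union> F2. (if s \<in> F then c s else 0) * s)"
      by (rule sum.cong) auto
    finally show ?thesis .
  qed
  show "a + b \<in> gen_ideal S"
  proof (rule gen_idealI)
    show "a + b = (\<Sum>s\<in>F1 \<union> F2. ((if s \<in> F1 then c1 s else 0) + (if s \<in> F2 then c2 s else 0)) * s)"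
      unfolding ab distrib_right sum.distrib by (simp flip: restrict)
  qed (use F in auto)
next
  fix r a assume "a \<in> gen_ideal S"
  then obtain F c where "finite F" "F \<subseteq> S" "a = (\<Sum>s\<in>F. c s * s)"
    unfolding gen_ideal_def by blast
  then show "r * a \<in> gen_ideal S"
    by (intro gen_idealI[of F S _ "\<lambda>s. r * c s"]) (simp_all add: sum_distrib_left mult.assoc)
qed

lemma subset_radical: "K \<subseteq> radical K"
  unfolding radical_def by (auto intro: exI[of _ 1])

lemma radical_mono: "I \<subseteq> J \<Longrightarrow> radical I \<subseteq> radical J"
  unfolding radical_def by blast

lemma radical_power_mem: "x ^ k \<in> radical K \<Longrightarrow> x \<in> radical K"
  unfolding radical_def by (auto simp flip: power_mult)

lemma is_ideal_radical:
  assumes K: "is_ideal K" shows "is_ideal (radical K)"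
proof (rule is_idealI)
  show "0 \<in> radical K"
    using ideal_zero[OF K] unfolding radical_def by (auto intro: exI[of _ 1])
next
  fix a b assume "a \<in> radical K" "b \<in> radical K"
  then obtain m n where mn: "a ^ m \<in> K" "b ^ n \<in> K" unfolding radical_def by blast
  have "of_nat (m + n choose k) * a ^ k * b ^ (m + n - k) \<in> K" for k
  proof (cases "m \<le> k")
    case True
    then have "a ^ k = a ^ m * a ^ (k - m)" by (simp flip: power_add)
    then show ?thesis using mn K by (simp add: ideal_mult_left ideal_mult_right mult.assoc)
  next
    case False
    then have "m + n - k = n + (m - k)" by simp
    then have "b ^ (m + n - k) = b ^ n * b ^ (m - k)" by (simp add: power_add)
    then show ?thesis using mn K by (simp add: ideal_mult_left ideal_mult_right)
  qed
  then have "(a + b) ^ (m + n) \<in> K"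
    unfolding binomial_ring by (intro ideal_sum[OF K])
  then show "a + b \<in> radical K" unfolding radical_def by blast
next
  fix r a assume "a \<in> radical K"
  then obtain m where "a ^ m \<in> K" unfolding radical_def by blast
  then have "(r * a) ^ m \<in> K" using K by (simp add: power_mult_distrib ideal_mult_left)
  then show "r * a \<in> radical K" unfolding radical_def by blast
qed

lemma is_ideal_saturation:
  assumes K: "is_ideal K" shows "is_ideal {x. \<exists>A. l ^ A * x \<in> K}"
proof (rule is_idealI)
  show "0 \<in> {x. \<exists>A. l ^ A * x \<in> K}" using K by (simp add: ideal_zero)
next
  fix a b assume "a \<in> {x. \<exists>A. l ^ A * x \<in> K}" "b \<in> {x. \<exists>A. l ^ A * x \<in> K}"
  then obtain A B where "l ^ A * a \<in> K" "l ^ B * b \<in> K" by blast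
  then have "l ^ B * (l ^ A * a) + l ^ A * (l ^ B * b) \<in> K"
    using K by (simp add: ideal_add ideal_mult_left)
  then have "l ^ (A + B) * (a + b) \<in> K" by (simp add: power_add algebra_simps)
  then show "a + b \<in> {x. \<exists>A. l ^ A * x \<in> K}" by blast
next
  fix r a assume "a \<in> {x. \<exists>A. l ^ A * x \<in> K}"
  then obtain A where "l ^ A * a \<in> K" by blast
  then have "l ^ A * (r * a) \<in> K" using ideal_mult_left[OF K, of _ r] by (simp add: mult.left_commute)
  then show "r * a \<in> {x. \<exists>A. l ^ A * x \<in> K}" by blast
qed

lemma gen_ideal_congruent_mod_principal:
  assumes I: "is_ideal I" and S: "\<And>s. s \<in> S \<Longrightarrow> \<exists>u. s - l * u \<in> I" and x: "x \<in> gen_ideal S"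
  shows "\<exists>u. x - l * u \<in> I"
proof -
  have "is_ideal {x. \<exists>u. x - l * u \<in> I}"
  proof (rule is_idealI)
    show "0 \<in> {x. \<exists>u. x - l * u \<in> I}" using ideal_zero[OF I] by (auto intro: exI[of _ 0])
  next
    fix a b assume "a \<in> {x. \<exists>u. x - l * u \<in> I}" "b \<in> {x. \<exists>u. x - l * u \<in> I}"
    then obtain u v where "a - l * u \<in> I" "b - l * v \<in> I" by blast
    then have "a + b - l * (u + v) \<in> I"
      using ideal_add[OF I] by (metis add_diff_add distrib_left)
    then show "a + b \<in> {x. \<exists>u. x - l * u \<in> I}" by blast
  next
    fix r a assume "a \<in> {x. \<exists>u. x - l * u \<in> I}"
    then obtain u where "a - l * u \<in> I" by blast
    then have "r * (a - l * u) \<in> I" by (rule ideal_mult_left[OF I])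
    then have "r * a - l * (r * u) \<in> I" by (simp add: algebra_simps)
    then show "r * a \<in> {x. \<exists>u. x - l * u \<in> I}" by blast
  qed
  then show ?thesis using gen_ideal_minimal[of _ S] S x by blast
qed

lemma gen_ideal_pair_congruent_mod:
  assumes a: "a = a' + l * u" and b: "b = b' + l * v"
  shows "gen_ideal {a, b} \<subseteq> gen_ideal {l, a', b'}"
    and "x \<in> gen_ideal {l, a', b'} \<Longrightarrow> \<exists>w. x - l * w \<in> gen_ideal {a, b}"
proof -
  have "a \<in> gen_ideal {l, a', b'}" "b \<in> gen_ideal {l, a', b'}"
    unfolding a b
    by (intro ideal_add[OF is_ideal_gen_ideal] ideal_mult_right[OF is_ideal_gen_ideal] gen_ideal_generator; simp)+
  then show "gen_ideal {a, b} \<subseteq> gen_ideal {l, a', b'}"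
    by (intro gen_ideal_minimal[OF is_ideal_gen_ideal]) simp
next
  assume x: "x \<in> gen_ideal {l, a', b'}"
  have "l - l * 1 \<in> gen_ideal {a, b}" by (simp add: ideal_zero is_ideal_gen_ideal)
  moreover have "a' - l * (- u) \<in> gen_ideal {a, b}" "b' - l * (- v) \<in> gen_ideal {a, b}"
    using a b by (simp_all add: gen_ideal_generator)
  ultimately show "\<exists>w. x - l * w \<in> gen_ideal {a, b}"
    by (intro gen_ideal_congruent_mod_principal[OF is_ideal_gen_ideal _ x]) blast
qed

text \<open>If x^n \<equiv> l u modulo I and l^A x \<in> \<surd>I, then
  x^(nA+1) = x ((x^n)^A - (l u)^A) + (l^A x) u^A \<in> \<surd>I.\<close>
lemma radical_eq_inter_if_saturated:
  fixes l :: "'b::comm_ring_1"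
  assumes I: "is_ideal I" and IJ: "I \<subseteq> J" and IP: "I \<subseteq> P" and P: "radical P \<subseteq> P"
    and J_mod: "\<And>x. x \<in> J \<Longrightarrow> \<exists>u. x - l * u \<in> I"
    and P_sat: "\<And>x. x \<in> P \<Longrightarrow> \<exists>A. l ^ A * x \<in> radical I"
  shows "radical I = radical J \<inter> P"
proof
  show "radical I \<subseteq> radical J \<inter> P"
    using radical_mono[OF IJ] radical_mono[OF IP] P by blast
next
  show "radical J \<inter> P \<subseteq> radical I"
  proof
    fix x assume x: "x \<in> radical J \<inter> P"
    then obtain n where "x ^ n \<in> J" unfolding radical_def by blast
    then obtain u where u: "x ^ n - l * u \<in> I" using J_mod by blast
    obtain A where A: "l ^ A * x \<in> radical I" using x P_sat by blast
    have "(x ^ n) ^ A - (l * u) ^ A \<in> I"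
      unfolding power_diff_sumr2 using u by (rule ideal_mult_right[OF I])
    then have "x * ((x ^ n) ^ A - (l * u) ^ A) + (l ^ A * x) * u ^ A \<in> radical I"
      using is_ideal_radical[OF I] subset_radical A
      by (blast intro: ideal_add ideal_mult_left ideal_mult_right)
    also have "x * ((x ^ n) ^ A - (l * u) ^ A) + (l ^ A * x) * u ^ A = x ^ (n * A + 1)"
      by (simp add: power_mult power_mult_distrib right_diff_distrib mult.assoc)
    finally show "x \<in> radical I" by (rule radical_power_mem)
  qed
qed

section \<open>Evaluation of polynomials\<close>

definition is_ring_hom :: "('a::comm_ring_1 \<Rightarrow> 'b::comm_ring_1) \<Rightarrow> bool" where
  "is_ring_hom h \<longleftrightarrow> h 0 = 0 \<and> h 1 = 1 \<and> (\<forall>a b. h (a + b) = h a + h b) \<and> (\<forall>a b. h (a * b) = h a * h b)"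

lemma ring_hom_sum: "is_ring_hom h \<Longrightarrow> h (\<Sum>i\<in>A. f i) = (\<Sum>i\<in>A. h (f i))"
  by (induction A rule: infinite_finite_induct) (auto simp: is_ring_hom_def)

lemma ring_hom_prod: "is_ring_hom h \<Longrightarrow> h (\<Prod>i\<in>A. f i) = (\<Prod>i\<in>A. h (f i))"
  by (induction A rule: infinite_finite_induct) (auto simp: is_ring_hom_def)

lemma ring_hom_power: "is_ring_hom h \<Longrightarrow> h (x ^ n) = h x ^ n"
  by (induction n) (auto simp: is_ring_hom_def)

lemma is_ring_hom_id: "is_ring_hom id"
  by (simp add: is_ring_hom_def)

lemma is_ring_hom_pCons_0: "is_ring_hom (\<lambda>x. [:x:])"
  by (simp add: is_ring_hom_def mult.commute)

lemma is_ring_hom_comp: "is_ring_hom g \<Longrightarrow> is_ring_hom h \<Longrightarrow> is_ring_hom (\<lambda>x. g (h x))"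
  by (simp add: is_ring_hom_def)

lemma is_ring_hom_single_0: "is_ring_hom (\<lambda>a. Poly_Mapping.single 0 a :: 'a::comm_ring_1 mpoly4)"
  by (simp add: is_ring_hom_def single_add mult_single)

lemma is_ideal_ring_hom_vimage: "is_ring_hom h \<Longrightarrow> is_ideal K \<Longrightarrow> is_ideal {x. h x \<in> K}"
  by (simp add: is_ring_hom_def is_ideal_def)

lemma map_poly_ring_hom_mult:
  assumes "is_ring_hom h" shows "map_poly h (p * q) = map_poly h p * map_poly h q"
proof (rule poly_eqI)
  have "h 0 = 0" using assms by (simp add: is_ring_hom_def)
  then show "coeff (map_poly h (p * q)) n = coeff (map_poly h p * map_poly h q) n" for n
    using assms by (simp add: coeff_map_poly coeff_mult ring_hom_sum) (simp add: is_ring_hom_def)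
qed

lemma map_poly_ring_hom_power:
  assumes "is_ring_hom h" shows "map_poly h (p ^ n) = map_poly h p ^ n"
  using assms by (induction n) (simp_all add: map_poly_ring_hom_mult, simp add: is_ring_hom_def)

instance var :: finite
proof
  have "(UNIV :: var set) = {W, X, Y, Z}" using var.exhaust by blast
  then show "finite (UNIV :: var set)" unfolding \<open>UNIV = _\<close> by simp
qed

definition monomial_value :: "(var \<Rightarrow> 'b::comm_ring_1) \<Rightarrow> (var \<Rightarrow>\<^sub>0 nat) \<Rightarrow> 'b" where
  "monomial_value \<phi> m = (\<Prod>v\<in>UNIV. \<phi> v ^ Poly_Mapping.lookup m v)"

lemma monomial_value_add: "monomial_value \<phi> (m + m') = monomial_value \<phi> m * monomial_value \<phi> m'"
  by (simp add: monomial_value_def lookup_add power_add prod.distrib)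

lemma monomial_value_mult: "monomial_value (\<lambda>v. \<alpha> v * \<beta> v) m = monomial_value \<alpha> m * monomial_value \<beta> m"
  by (simp add: monomial_value_def power_mult_distrib prod.distrib)

lemma bideg1_eq_sum_UNIV: "bideg1 m = (\<Sum>v\<in>UNIV. wt v * Poly_Mapping.lookup m v)"
  unfolding bideg1_def by (rule sum.mono_neutral_left) (auto simp: in_keys_iff)

lemma monomial_value_weights: "monomial_value (\<lambda>v. x ^ wt v) m = x ^ bideg1 m"
  by (simp add: monomial_value_def bideg1_eq_sum_UNIV power_sum power_mult)

lemma monomial_value_ring_hom: "is_ring_hom h \<Longrightarrow> monomial_value (\<lambda>v. h (\<phi> v)) m = h (monomial_value \<phi> m)"
  by (simp add: monomial_value_def ring_hom_prod ring_hom_power)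

lemma mpeval_eq_sum: "mpeval p c \<phi> = (\<Sum>m\<in>Poly_Mapping.keys p. c (Poly_Mapping.lookup p m) * monomial_value \<phi> m)"
proof -
  have "(\<Prod>v\<in>Poly_Mapping.keys m. \<phi> v ^ Poly_Mapping.lookup m v) = monomial_value \<phi> m" for m
    unfolding monomial_value_def by (rule prod.mono_neutral_left) (auto simp: in_keys_iff)
  then show ?thesis by (simp add: mpeval_def)
qed

lemma mpeval_eq_sum_superset:
  assumes "c 0 = 0" "finite K" "Poly_Mapping.keys p \<subseteq> K"
  shows "mpeval p c \<phi> = (\<Sum>m\<in>K. c (Poly_Mapping.lookup p m) * monomial_value \<phi> m)"
  unfolding mpeval_eq_sum using assms by (intro sum.mono_neutral_left) (auto simp: in_keys_iff)

lemma poly_mapping_sum_single: "(\<Sum>m\<in>Poly_Mapping.keys p. Poly_Mapping.single m (Poly_Mapping.lookup p m)) = p"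
  by (rule poly_mapping_eqI) (simp add: lookup_sum lookup_single when_def in_keys_iff)

lemma is_ring_hom_mpeval:
  assumes c: "is_ring_hom c" shows "is_ring_hom (\<lambda>p. mpeval p c \<phi>)"
proof -
  have c0: "c 0 = 0" using c by (simp add: is_ring_hom_def)
  have add: "mpeval (p + q) c \<phi> = mpeval p c \<phi> + mpeval q c \<phi>" for p q
  proof -
    let ?K = "Poly_Mapping.keys p \<union> Poly_Mapping.keys q"
    have "finite ?K" "Poly_Mapping.keys (p + q) \<subseteq> ?K" by (simp_all add: keys_add)
    then show ?thesis
      using c mpeval_eq_sum_superset[of c ?K _ \<phi>, OF c0]
      by (simp add: is_ring_hom_def lookup_add distrib_right sum.distrib)
  qed
  have zero: "mpeval 0 c \<phi> = 0" by (simp add: mpeval_def)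
  have single: "mpeval (Poly_Mapping.single m a) c \<phi> = c a * monomial_value \<phi> m" for m a
    using c0 by (simp add: mpeval_eq_sum)
  have sum: "mpeval (\<Sum>i\<in>A. p i) c \<phi> = (\<Sum>i\<in>A. mpeval (p i) c \<phi>)" for A and p :: "'c \<Rightarrow> _"
    by (induction A rule: infinite_finite_induct) (simp_all add: add zero)
  have mult: "mpeval (p * q) c \<phi> = mpeval p c \<phi> * mpeval q c \<phi>" for p q
  proof -
    have "p * q = (\<Sum>m\<in>Poly_Mapping.keys p. \<Sum>m'\<in>Poly_Mapping.keys q.
        Poly_Mapping.single (m + m') (Poly_Mapping.lookup p m * Poly_Mapping.lookup q m'))"
      by (subst (1 2) poly_mapping_sum_single[symmetric])
        (simp add: sum_distrib_left sum_distrib_right mult_single; rule sum.swap)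
    then have "mpeval (p * q) c \<phi> = (\<Sum>m\<in>Poly_Mapping.keys p. \<Sum>m'\<in>Poly_Mapping.keys q.
        c (Poly_Mapping.lookup p m) * monomial_value \<phi> m * (c (Poly_Mapping.lookup q m') * monomial_value \<phi> m'))"
      using c by (simp add: sum single monomial_value_add is_ring_hom_def mult_ac)
    then show ?thesis by (simp add: mpeval_eq_sum sum_product)
  qed
  have "mpeval 1 c \<phi> = 1"
    using c single[of 0 1] by (simp add: is_ring_hom_def monomial_value_def)
  then show ?thesis
    using zero add mult by (simp add: is_ring_hom_def)
qed

lemma Var_power: "(Var v :: 'a::comm_ring_1 mpoly4) ^ n = Poly_Mapping.single (Poly_Mapping.single v n) 1"
proof (induction n)
  case (Suc n)
  have "Poly_Mapping.single v (Suc n) = Poly_Mapping.single v 1 + Poly_Mapping.single v n"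
    by (simp flip: single_add)
  with Suc show ?case by (simp add: Var_def mult_single)
qed simp

lemma monomial_value_Var: "monomial_value Var m = (Poly_Mapping.single m 1 :: 'a::comm_ring_1 mpoly4)"
proof -
  have prod_single: "(\<Prod>v\<in>A. Poly_Mapping.single (g v) 1 :: 'a mpoly4) = Poly_Mapping.single (\<Sum>v\<in>A. g v) 1"
    for A and g :: "var \<Rightarrow> var \<Rightarrow>\<^sub>0 nat"
    by (induction A rule: infinite_finite_induct) (simp_all add: mult_single)
  have "(\<Sum>v\<in>UNIV. Poly_Mapping.single v (Poly_Mapping.lookup m v)) = m"
    by (rule poly_mapping_eqI) (simp add: lookup_sum lookup_single when_def)
  then show ?thesis by (simp add: monomial_value_def Var_power prod_single)
qed

lemma is_ring_hom_lam_subst: "is_ring_hom (lam_subst :: 'a::comm_ring_1 mpoly4 \<Rightarrow> _)"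
  unfolding lam_subst_def[abs_def]
  by (intro is_ring_hom_mpeval is_ring_hom_comp[OF is_ring_hom_pCons_0 is_ring_hom_single_0])

lemma lam_subst_eq_sum:
  "lam_subst (p :: 'a::comm_ring_1 mpoly4) =
     (\<Sum>m\<in>Poly_Mapping.keys p. [:0,1:] ^ bideg1 m * [:Poly_Mapping.single m (Poly_Mapping.lookup p m):])"
  unfolding lam_subst_def mpeval_eq_sum
proof (rule sum.cong[OF refl])
  fix m
  let ?a = "Poly_Mapping.lookup p m"
  have "monomial_value (\<lambda>v. [:0,1:] ^ wt v * [:Var v:]) m = [:0,1:] ^ bideg1 m * [:Poly_Mapping.single m 1 :: 'a mpoly4:]"
    by (simp only: monomial_value_mult monomial_value_weights
        monomial_value_ring_hom[OF is_ring_hom_pCons_0, of Var] monomial_value_Var)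
  then have "[:Poly_Mapping.single 0 ?a:] * monomial_value (\<lambda>v. [:0,1:] ^ wt v * [:Var v:]) m
      = [:0,1:] ^ bideg1 m * ([:Poly_Mapping.single 0 ?a:] * [:Poly_Mapping.single m 1:])"
    by (simp only: mult.left_commute)
  also have "[:Poly_Mapping.single 0 ?a:] * [:Poly_Mapping.single m 1:] = [:Poly_Mapping.single m ?a:]"
    by (simp add: mult_single)
  finally show "[:Poly_Mapping.single 0 ?a:] * monomial_value (\<lambda>v. [:0,1:] ^ wt v * [:Var v:]) m
      = [:0,1:] ^ bideg1 m * [:Poly_Mapping.single m ?a:]" .
qed

section \<open>Bihomogeneous components\<close>

lemma lookup_bicomp:
  "Poly_Mapping.lookup (bicomp p i) m = (if bideg1 m = i then Poly_Mapping.lookup p m else 0)"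
proof -
  have "finite {m. (if bideg1 m = i then Poly_Mapping.lookup p m else 0) \<noteq> 0}"
    by (rule finite_subset[OF _ finite_lookup[of p]]) auto
  then show ?thesis unfolding bicomp_def by simp
qed

lemma in_keys_bicomp_iff: "m \<in> Poly_Mapping.keys (bicomp p i) \<longleftrightarrow> m \<in> Poly_Mapping.keys p \<and> bideg1 m = i"
  by (simp add: in_keys_iff lookup_bicomp)

lemma bicomp_eq_0: "i \<notin> bideg1 ` Poly_Mapping.keys p \<Longrightarrow> bicomp p i = 0"
  by (rule poly_mapping_eqI) (auto simp: lookup_bicomp in_keys_iff)

lemma sum_bicomp: "(\<Sum>i\<in>bideg1 ` Poly_Mapping.keys p. bicomp p i) = p"
  by (rule poly_mapping_eqI) (auto simp: lookup_sum lookup_bicomp in_keys_iff)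

lemma lam_subst_bicomp: "lam_subst (bicomp (p :: 'a::comm_ring_1 mpoly4) i) = [:0,1:] ^ i * [:bicomp p i:]"
proof -
  let ?q = "bicomp p i"
  have "lam_subst ?q = (\<Sum>m\<in>Poly_Mapping.keys ?q. [:0,1:] ^ i * [:Poly_Mapping.single m (Poly_Mapping.lookup ?q m):])"
    unfolding lam_subst_eq_sum by (rule sum.cong) (auto simp: in_keys_bicomp_iff)
  also have "\<dots> = [:0,1:] ^ i * [:\<Sum>m\<in>Poly_Mapping.keys ?q. Poly_Mapping.single m (Poly_Mapping.lookup ?q m):]"
    by (simp add: ring_hom_sum[OF is_ring_hom_pCons_0] sum_distrib_left)
  finally show ?thesis by (simp add: poly_mapping_sum_single)
qed

lemma lam_subst_eq_sum_bicomp: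
  "lam_subst (p :: 'a::comm_ring_1 mpoly4) = (\<Sum>i\<in>bideg1 ` Poly_Mapping.keys p. [:0,1:] ^ i * [:bicomp p i:])"
  by (subst (1) sum_bicomp[symmetric])
    (simp add: ring_hom_sum[OF is_ring_hom_lam_subst] lam_subst_bicomp)

lemma mpeval_bicomp_curve_scale:
  "mpeval (bicomp q i) id (curve_point (\<mu> * s) t) = \<mu> ^ i * mpeval (bicomp q i) id (curve_point s t)"
proof -
  have "curve_point (\<mu> * s) t = (\<lambda>v. \<mu> ^ wt v * curve_point s t v)"
    by (rule ext) (simp add: curve_point_def wt_def power_mult_distrib split: var.split)
  then have "monomial_value (curve_point (\<mu> * s) t) m = \<mu> ^ bideg1 m * monomial_value (curve_point s t) m" for m
    by (simp add: monomial_value_mult monomial_value_weights)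
  then show ?thesis
    unfolding mpeval_eq_sum sum_distrib_left by (intro sum.cong) (auto simp: in_keys_bicomp_iff)
qed

text \<open>Replacing s by \<mu> s scales the component of first bidegree i by \<mu>^i, so the components are
  the coefficients of a polynomial in \<mu> with infinitely many roots.\<close>
lemma bicomp_mem_macaulay_ideal:
  assumes q: "(q :: 'a::{idom,ring_char_0} mpoly4) \<in> macaulay_ideal"
  shows "bicomp q i \<in> macaulay_ideal"
  unfolding macaulay_ideal_def
proof (intro CollectI allI)
  fix s t :: 'a
  let ?B = "bideg1 ` Poly_Mapping.keys q"
  let ?e = "\<lambda>j. mpeval (bicomp q j) id (curve_point s t)"
  have "poly (\<Sum>j\<in>?B. monom (?e j) j) \<mu> = 0" for \<mu>
  proof -
    have "poly (\<Sum>j\<in>?B. monom (?e j) j) \<mu> = mpeval (\<Sum>j\<in>?B. bicomp q j) id (curve_point (\<mu> * s) t)"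
      by (simp add: poly_sum poly_monom mpeval_bicomp_curve_scale mult_ac
          ring_hom_sum[OF is_ring_hom_mpeval[OF is_ring_hom_id]])
    then show ?thesis
      using q by (simp add: sum_bicomp macaulay_ideal_def)
  qed
  then have "(\<Sum>j\<in>?B. monom (?e j) j) = 0"
    using poly_all_0_iff_0 by blast
  then have "coeff (\<Sum>j\<in>?B. monom (?e j) j) i = 0" by simp
  then show "mpeval (bicomp q i) id (curve_point s t) = 0"
    by (cases "i \<in> ?B") (simp_all add: coeff_sum bicomp_eq_0 mpeval_def)
qed

section \<open>The extended ideal pT\<close>

lemma is_ideal_macaulay_ideal: "is_ideal (macaulay_ideal :: 'a::comm_ring_1 mpoly4 set)"
  by (simp add: is_ideal_def macaulay_ideal_def is_ring_hom_mpeval[OF is_ring_hom_id, unfolded is_ring_hom_def])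

lemma mem_gen_ideal_const_iff:
  assumes K: "is_ideal K"
  shows "h \<in> gen_ideal ((\<lambda>p. [:p:]) ` K) \<longleftrightarrow> (\<forall>k. coeff h k \<in> K)"
proof
  have "is_ideal {h. \<forall>k. coeff h k \<in> K}"
    using K by (intro is_idealI) (auto simp: ideal_zero ideal_add coeff_mult intro!: ideal_sum ideal_mult_left)
  moreover have "[:p:] \<in> {h. \<forall>k. coeff h k \<in> K}" if "p \<in> K" for p
    using that K by (auto simp: coeff_pCons ideal_zero split: nat.split)
  ultimately have "gen_ideal ((\<lambda>p. [:p:]) ` K) \<subseteq> {h. \<forall>k. coeff h k \<in> K}"
    by (intro gen_ideal_minimal) auto
  then show "h \<in> gen_ideal ((\<lambda>p. [:p:]) ` K) \<Longrightarrow> \<forall>k. coeff h k \<in> K" by blast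
next
  assume "\<forall>k. coeff h k \<in> K"
  then have "(\<Sum>i\<le>degree h. [:0,1:] ^ i * [:coeff h i:]) \<in> gen_ideal ((\<lambda>p. [:p:]) ` K)"
    by (intro ideal_sum[OF is_ideal_gen_ideal] ideal_mult_left[OF is_ideal_gen_ideal] gen_ideal_generator) auto
  also have "(\<Sum>i\<le>degree h. [:0,1:] ^ i * [:coeff h i:]) = h"
    by (subst (3) poly_as_sum_of_monoms[symmetric]) (simp add: monom_altdef mult.commute)
  finally show "h \<in> gen_ideal ((\<lambda>p. [:p:]) ` K)" .
qed

text \<open>Evaluating the coefficients at a point of the curve lands in polynomials over a domain,
  where nilpotents vanish.\<close>
lemma radical_gen_ideal_macaulay_subset:
  "radical (gen_ideal ((\<lambda>p. [:p:]) ` macaulay_ideal)) \<subseteq> gen_ideal ((\<lambda>p. [:p:]) ` (macaulay_ideal :: 'a::idom mpoly4 set))"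
proof
  fix h :: "'a mpoly4 poly"
  assume "h \<in> radical (gen_ideal ((\<lambda>p. [:p:]) ` macaulay_ideal))"
  then obtain n where "\<forall>k. coeff (h ^ n) k \<in> macaulay_ideal"
    unfolding radical_def mem_gen_ideal_const_iff[OF is_ideal_macaulay_ideal] by blast
  have "coeff h k \<in> macaulay_ideal" for k
    unfolding macaulay_ideal_def
  proof (intro CollectI allI)
    fix s t :: 'a
    let ?e = "\<lambda>q. mpeval q id (curve_point s t)"
    have e: "is_ring_hom ?e" by (rule is_ring_hom_mpeval[OF is_ring_hom_id])
    then have e0: "?e 0 = 0" by (simp add: is_ring_hom_def)
    have "map_poly ?e h ^ n = 0"
      using \<open>\<forall>k. _\<close> by (intro poly_eqI)
        (simp add: map_poly_ring_hom_power[OF e, symmetric] coeff_map_poly[of ?e, OF e0] macaulay_ideal_def)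
    then show "?e (coeff h k) = 0"
      by (simp flip: coeff_map_poly[of ?e, OF e0])
  qed
  then show "h \<in> gen_ideal ((\<lambda>p. [:p:]) ` macaulay_ideal)"
    by (simp add: mem_gen_ideal_const_iff[OF is_ideal_macaulay_ideal])
qed

lemma lam_power_mult_cancel:
  fixes a b :: "'b::comm_ring_1 poly"
  assumes "[:0,1:] ^ k * a = [:0,1:] ^ k * b" shows "a = b"
proof (rule poly_eqI)
  have "coeff c n = coeff ([:0,1:] ^ k * c) (n + k)" for c :: "'b poly" and n
    using coeff_monom_mult[of 1 k c "n + k"] by (simp add: monom_altdef)
  then show "coeff a n = coeff b n" for n using assms by metis
qed

lemma lam_subst_shifted_eq:
  fixes f :: "'a::comm_ring_1 mpoly4"
  assumes low: "\<forall>i<imin. bicomp f i = 0" and ls: "lam_subst f = [:0,1:] ^ imin * Ft"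
  shows "Ft = (\<Sum>i\<in>bideg1 ` Poly_Mapping.keys f. [:0,1:] ^ (i - imin) * [:bicomp f i:])"
proof (rule lam_power_mult_cancel)
  have "[:0,1:] ^ i * [:bicomp f i:] = [:0,1:] ^ imin * ([:0,1:] ^ (i - imin) * [:bicomp f i:])" for i
  proof (cases "i < imin")
    case False
    then have "[:0,1:] ^ i = ([:0,1:] :: 'a mpoly4 poly) ^ imin * [:0,1:] ^ (i - imin)"
      by (simp flip: power_add)
    then show ?thesis by (simp only: mult.assoc)
  qed (simp add: low)
  then show "[:0,1:] ^ imin * Ft = [:0,1:] ^ imin * (\<Sum>i\<in>bideg1 ` Poly_Mapping.keys f. [:0,1:] ^ (i - imin) * [:bicomp f i:])"
    by (simp add: ls[symmetric] lam_subst_eq_sum_bicomp sum_distrib_left)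
qed

lemma lam_subst_shifted_mod_lam:
  fixes f :: "'a::comm_ring_1 mpoly4"
  assumes low: "\<forall>i<imin. bicomp f i = 0" and ls: "lam_subst f = [:0,1:] ^ imin * Ft"
  shows "\<exists>Y. Ft = [:bicomp f imin:] + [:0,1:] * Y"
proof -
  have "coeff Ft 0 = (\<Sum>i\<in>bideg1 ` Poly_Mapping.keys f. if i = imin then bicomp f imin else 0)"
    unfolding lam_subst_shifted_eq[OF low ls] coeff_sum
    using low by (intro sum.cong) (auto simp: coeff_mult_0 power_0_left simp flip: poly_0_coeff_0)
  also have "\<dots> = bicomp f imin"
    using bicomp_eq_0[of imin f] by auto
  finally have "coeff Ft 0 = bicomp f imin" .
  moreover obtain a Y where "Ft = pCons a Y" by (cases Ft)
  ultimately show ?thesis by auto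
qed

lemma lam_subst_shifted_mem_gen_ideal_macaulay:
  fixes f :: "'a::{idom,ring_char_0} mpoly4"
  assumes "f \<in> macaulay_ideal" "\<forall>i<imin. bicomp f i = 0" "lam_subst f = [:0,1:] ^ imin * Ft"
  shows "Ft \<in> gen_ideal ((\<lambda>p. [:p:]) ` macaulay_ideal)"
  unfolding lam_subst_shifted_eq[OF assms(2,3)]
  using assms(1) by (intro ideal_sum[OF is_ideal_gen_ideal] ideal_mult_left[OF is_ideal_gen_ideal]
      gen_ideal_generator imageI bicomp_mem_macaulay_ideal)

text \<open>Every q \<in> p is radical over (f, g), so each substituted component \<lambda>^i q^(i) lies in the
  radical of any ideal containing the substituted f and g; a high power of \<lambda> then collects them.\<close>
lemma gen_ideal_macaulay_saturated:
  fixes f g :: "'a::{idom,ring_char_0} mpoly4"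
  assumes rad: "radical (gen_ideal {f, g}) = macaulay_ideal"
    and I: "is_ideal I" and fg: "lam_subst f \<in> I" "lam_subst g \<in> I"
    and x: "x \<in> gen_ideal ((\<lambda>p. [:p:]) ` macaulay_ideal)"
  shows "\<exists>A. [:0,1:] ^ A * x \<in> radical I"
proof -
  have "gen_ideal {f, g} \<subseteq> {q. lam_subst q \<in> I}"
    using fg by (intro gen_ideal_minimal is_ideal_ring_hom_vimage[OF is_ring_hom_lam_subst I]) auto
  then have lam_subst_radical: "lam_subst q \<in> radical I" if "q \<in> macaulay_ideal" for q
    using that unfolding rad[symmetric] radical_def
    by (auto simp flip: ring_hom_power[OF is_ring_hom_lam_subst])
  have "[:q:] \<in> {x. \<exists>A. [:0,1:] ^ A * x \<in> radical I}" if q: "q \<in> macaulay_ideal" for q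
  proof -
    let ?B = "bideg1 ` Poly_Mapping.keys q"
    define A where "A = Max (insert 0 ?B)"
    have "[:0,1:] ^ A * [:q:] = (\<Sum>i\<in>?B. [:0,1:] ^ A * [:bicomp q i:])"
      by (subst (1) sum_bicomp[symmetric]) (simp add: ring_hom_sum[OF is_ring_hom_pCons_0] sum_distrib_left)
    also have "\<dots> = (\<Sum>i\<in>?B. [:0,1:] ^ (A - i) * lam_subst (bicomp q i))"
    proof (rule sum.cong[OF refl])
      fix i assume "i \<in> ?B"
      then have "i \<le> A" by (simp add: A_def)
      then have "([:0,1:] :: 'a mpoly4 poly) ^ A = [:0,1:] ^ (A - i) * [:0,1:] ^ i"
        by (simp flip: power_add)
      then show "[:0,1:] ^ A * [:bicomp q i:] = [:0,1:] ^ (A - i) * lam_subst (bicomp q i)"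
        by (simp only: lam_subst_bicomp mult.assoc)
    qed
    also have "\<dots> \<in> radical I"
      using q by (intro ideal_sum[OF is_ideal_radical[OF I]] ideal_mult_left[OF is_ideal_radical[OF I]]
          lam_subst_radical bicomp_mem_macaulay_ideal)
    finally show ?thesis by blast
  qed
  then have "gen_ideal ((\<lambda>p. [:p:]) ` macaulay_ideal) \<subseteq> {x. \<exists>A. [:0,1:] ^ A * x \<in> radical I}"
    by (intro gen_ideal_minimal is_ideal_saturation is_ideal_radical[OF I]) auto
  then show ?thesis using x by blast
qed

theorem mainTheorem4:
  fixes f g :: "'a::field_char_0 mpoly4"
    and d1 d2 imin jmin :: nat
    and Ft Gt :: "'a mpoly4 poly"
  assumes "alg_closed TYPE('a)"
    and "f \<in> macaulay_ideal" and "g \<in> macaulay_ideal"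
    and "homogeneous f d1" and "homogeneous g d2"
    and "radical (gen_ideal {f, g}) = macaulay_ideal"
    and "bicomp f imin \<noteq> 0" and "\<forall>i<imin. bicomp f i = 0"
    and "bicomp g jmin \<noteq> 0" and "\<forall>j<jmin. bicomp g j = 0"
    and "lam_subst f = [:0,1:] ^ imin * Ft"
    and "lam_subst g = [:0,1:] ^ jmin * Gt"
  shows "radical (gen_ideal {Ft, Gt}) =
           radical (gen_ideal {[:0,1:], [:bicomp f imin:], [:bicomp g jmin:]})
           \<inter> gen_ideal ((\<lambda>p. [:p:]) ` macaulay_ideal)"
proof -
  let ?I = "gen_ideal {Ft, Gt}" and ?P = "gen_ideal ((\<lambda>p. [:p:]) ` macaulay_ideal)"
  obtain Yf Yg where "Ft = [:bicomp f imin:] + [:0,1:] * Yf" and "Gt = [:bicomp g jmin:] + [:0,1:] * Yg"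
    using lam_subst_shifted_mod_lam assms(8,10-12) by metis
  note I_congruent_J = gen_ideal_pair_congruent_mod[OF this]
  have "Ft \<in> ?P" "Gt \<in> ?P"
    using assms(2,3,8,10-12) by (simp_all add: lam_subst_shifted_mem_gen_ideal_macaulay)
  then have IP: "?I \<subseteq> ?P"
    by (intro gen_ideal_minimal[OF is_ideal_gen_ideal]) simp
  have "lam_subst f \<in> ?I" "lam_subst g \<in> ?I"
    unfolding assms(11,12) by (simp_all add: ideal_mult_left is_ideal_gen_ideal gen_ideal_generator)
  then have P_saturated: "\<exists>A. [:0,1:] ^ A * x \<in> radical ?I" if "x \<in> ?P" for x
    using that by (intro gen_ideal_macaulay_saturated[OF assms(6) is_ideal_gen_ideal])
  show ?thesis
    using radical_eq_inter_if_saturated[OF is_ideal_gen_ideal I_congruent_J(1) IP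
        radical_gen_ideal_macaulay_subset I_congruent_J(2) P_saturated] .
qed

end
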